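(* Let $X$ be a closed manifold, $\{g_t\}_{0\le t\le 1}$ an isotopy of homeomorphisms from $g_0=\mathrm{id}_X$ to $g=g_1$, with isotopy class $\widetilde g$ relative to endpoints, and let $\varphi\colon X\to S^1$ be continuous. Let $a=[\alpha_\varphi]\in\mathrm{H}^1(X;\mathbb{R})$ (with $A$ the discrete group $\mathbb{R}$), let $\{\widehat g_t\}$ be the lift of $\{g_t\}$ to bundle automorphisms of $\widehat X_a$ with $\widehat g_0=\mathrm{id}$, and set $\widehat g=\widehat g_1$. Then for $x\in X$ and a $g$-invariant Borel probability measure $\mu$ on $X$, $h_{x,\widetilde g}([\varphi])=\widehat{\mathrm{rot}}_{x,\alpha_\varphi}(\widehat g)$ and $h_{\mu,\widetilde g}([\varphi])=\widehat{\mathrm{rot}}_{\mu,\alpha_\varphi}(\widehat g)$.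
   Context: For a continuous $\varphi\colon X\to S^1=\mathbb{R}/\mathbb{Z}$ and a path $\gamma\colon[0,1]\to X$, let $\varphi_\gamma\colon[0,1]\to\mathbb{R}$ be a continuous lift of $t\mapsto\varphi(\gamma(t))$ and $\Delta_\varphi(\gamma)=\varphi_\gamma(1)-\varphi_\gamma(0)$; $\alpha_\varphi$ is the real singular $1$-cocycle on $X$ given by $\alpha_\varphi(\gamma)=\Delta_\varphi(\gamma)$. The homological translation vector is $h_{x,\widetilde g}([\varphi])=\lim_{n\to\infty}\frac1n\Delta_\varphi(\{g_t(x)\}*\{g_t(g(x))\}*\cdots*\{g_t(g^{n-1}(x))\})$ (concatenation of paths), when the limit exists, and the mean version is $h_{\mu,\widetilde g}([\varphi])=\int_X\Delta_\varphi(\{g_t(x)\}_{t})\,d\mu(x)$. For $a\in\mathrm{H}^1(X;\mathbb{R})$, $\pi\colon\widehat X_a\to X$ is the principal bundle with discrete fiber $\mathbb{R}$ whose holonomy is $a$, $T_r$ the action of $r\in\mathbb{R}$, and bundle automorphisms are homeomorphisms of $\widehat X_a$ covering homeomorphisms of $X$. For a real $1$-cocycle $\alpha$ representing $a$, let $\theta\colon\widehat X_a\to\mathbb{R}$ satisfy $d\theta=\pi^*\alpha$ and $\theta(T_r\widehat y)=\theta(\widehat y)+r$; $\rho_{x,\alpha}(\widehat g)=\theta(\widehat g(\widehat x))-\theta(\widehat x)$ for $\widehat x\in\pi^{-1}(x)$; $\widehat{\mathrm{rot}}_{x,\alpha}(\widehat g)=\lim_n\rho_{x,\alpha}(\widehat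 g^n)/n$ and $\widehat{\mathrm{rot}}_{\mu,\alpha}(\widehat g)=\int_X\rho_{x,\alpha}(\widehat g)\,d\mu(x)$. *)

theory Defs
  imports "HOL-Probability.Probability"
begin

definition closed_manifold :: "'a topology \<Rightarrow> bool" where
  "closed_manifold X \<longleftrightarrow> compact_space X \<and> Hausdorff_space X \<and> second_countable X \<and>
     (\<exists>n. \<forall>x\<in>topspace X. \<exists>U V. openin X U \<and> x \<in> U \<and> openin (Euclidean_space n) V \<and>
          (subtopology X U) homeomorphic_space (subtopology (Euclidean_space n) V))"

text \<open>S^1 = R/Z is modelled as the unit circle in the complex plane, with the covering
  projection R -> S^1 given by t \<mapsto> exp(2 pi i t).\<close>
definition circle_proj :: "real \<Rightarrow> complex" where
  "circle_proj t = exp (2 * of_real pi * \<i> * of_real t)"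

definition Delta :: "('a \<Rightarrow> complex) \<Rightarrow> (real \<Rightarrow> 'a) \<Rightarrow> real" where
  "Delta phi \<gamma> = (SOME d. \<exists>f. continuous_on {0..1} f \<and>
        (\<forall>t\<in>{0..1}. circle_proj (f t) = phi (\<gamma> t)) \<and> d = f 1 - f 0)"

definition join_paths :: "(real \<Rightarrow> 'a) \<Rightarrow> (real \<Rightarrow> 'a) \<Rightarrow> real \<Rightarrow> 'a" where
  "join_paths g1 g2 = (\<lambda>t. if t \<le> 1/2 then g1 (2 * t) else g2 (2 * t - 1))"

fun concat_paths :: "(real \<Rightarrow> 'a) list \<Rightarrow> real \<Rightarrow> 'a" where
  "concat_paths [] = undefined"
| "concat_paths [p] = p"
| "concat_paths (p # q # ps) = join_paths p (concat_paths (q # ps))"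

definition orbit_path :: "(real \<Rightarrow> 'a \<Rightarrow> 'a) \<Rightarrow> 'a \<Rightarrow> nat \<Rightarrow> real \<Rightarrow> 'a" where
  "orbit_path G x n = concat_paths (map (\<lambda>k t. G t ((G 1 ^^ k) x)) [0..<n])"

definition isotopy_from_id :: "'a topology \<Rightarrow> (real \<Rightarrow> 'a \<Rightarrow> 'a) \<Rightarrow> bool" where
  "isotopy_from_id X G \<longleftrightarrow>
     continuous_map (prod_topology (top_of_set {0..1}) X) X (\<lambda>(t, x). G t x) \<and>
     (\<forall>t\<in>{0..1}. homeomorphic_map X X (G t)) \<and>
     (\<forall>x\<in>topspace X. G 0 x = x)"

text \<open>Model: the total space is X \<times> R; its topology is generated by the "sheets"
  {(y, f y + c) | y \<in> U}, where U is open in X, f is a continuous real lift of phi on U and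
  c \<in> R.  The projection is fst, and r \<in> R acts by T_r(y,s) = (y, s + r).  Lifting a path
  gamma of X starting at (gamma 0, s) ends at (gamma 1, s + Delta_phi(gamma)), so the holonomy
  is alpha_phi.\<close>
definition bundle_top :: "'a topology \<Rightarrow> ('a \<Rightarrow> complex) \<Rightarrow> ('a \<times> real) topology" where
  "bundle_top X phi = topology_generated_by
     {{(y, f y + c) | y. y \<in> U} | U f c. openin X U \<and>
        continuous_map (subtopology X U) euclideanreal f \<and>
        (\<forall>y\<in>U. circle_proj (f y) = phi y)}"

definition bundle_act :: "real \<Rightarrow> 'a \<times> real \<Rightarrow> 'a \<times> real" where
  "bundle_act r = (\<lambda>(y, s). (y, s + r))"

text \<open>theta : \<widehat>X_a -> R with d theta = pi^* alpha_phi (evaluated on singular 1-simplices,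
  i.e. paths) and theta(T_r y) = theta(y) + r.\<close>
definition theta_function :: "'a topology \<Rightarrow> ('a \<Rightarrow> complex) \<Rightarrow> ('a \<times> real \<Rightarrow> real) \<Rightarrow> bool" where
  "theta_function X phi \<theta> \<longleftrightarrow>
     (\<forall>\<sigma>. pathin (bundle_top X phi) \<sigma> \<longrightarrow> \<theta> (\<sigma> 1) - \<theta> (\<sigma> 0) = Delta phi (fst \<circ> \<sigma>)) \<and>
     (\<forall>r. \<forall>y\<in>topspace (bundle_top X phi). \<theta> (bundle_act r y) = \<theta> y + r)"

definition lifted_isotopy ::
  "'a topology \<Rightarrow> ('a \<Rightarrow> complex) \<Rightarrow> (real \<Rightarrow> 'a \<Rightarrow> 'a) \<Rightarrow> (real \<Rightarrow> 'a \<times> real \<Rightarrow> 'a \<times> real) \<Rightarrow> bool" where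
  "lifted_isotopy X phi G Gh \<longleftrightarrow>
     (let Xh = bundle_top X phi in
       continuous_map (prod_topology (top_of_set {0..1}) Xh) Xh (\<lambda>(t, y). Gh t y) \<and>
       (\<forall>t\<in>{0..1}. homeomorphic_map Xh Xh (Gh t)) \<and>
       (\<forall>t\<in>{0..1}. \<forall>y\<in>topspace Xh. fst (Gh t y) = G t (fst y)) \<and>
       (\<forall>t\<in>{0..1}. \<forall>r. \<forall>y\<in>topspace Xh. Gh t (bundle_act r y) = bundle_act r (Gh t y)) \<and>
       (\<forall>y\<in>topspace Xh. Gh 0 y = y))"

definition rho :: "('a \<times> real \<Rightarrow> real) \<Rightarrow> ('a \<times> real \<Rightarrow> 'a \<times> real) \<Rightarrow> 'a \<Rightarrow> real" where
  "rho \<theta> gh x = (let xh = (SOME xh. fst xh = x) in \<theta> (gh xh) - \<theta> xh)"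

definition borel_of :: "'a topology \<Rightarrow> 'a measure" where
  "borel_of X = sigma (topspace X) {U. openin X U}"

end

theory Submission
  imports Defs
begin

text \<open>The lifted isotopy moves a point \<open>\<widehat>y\<close> of the bundle along a path over \<open>t \<mapsto> g\<^sub>t(y)\<close>.
  Concatenating these paths for \<open>\<widehat>y, \<widehat>g(\<widehat>y), \<dots>, \<widehat>g\<^sup>n\<^sup>-\<^sup>1(\<widehat>y)\<close> gives a path from \<open>\<widehat>y\<close> to
  \<open>\<widehat>g\<^sup>n(\<widehat>y)\<close> lying over the orbit path of \<open>y\<close>, so since \<open>d\<theta> = \<pi>\<^sup>*\<alpha>\<^sub>\<phi>\<close> the displacement
  \<open>\<rho>\<^sub>y(\<widehat>g\<^sup>n)\<close> equals \<open>\<Delta>\<^sub>\<phi>\<close> of the orbit path for every \<open>n \<ge> 1\<close>. Hence the two sequences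
  in the first claim coincide (at \<open>n = 0\<close> both quotients are \<open>0\<close>, as division by zero gives \<open>0\<close>),
  and the case \<open>n = 1\<close> makes the two integrands of the second claim agree pointwise.\<close>

lemma Delta_cong:
  assumes "\<And>t. t \<in> {0..1} \<Longrightarrow> \<gamma> t = \<gamma>' t"
  shows "Delta phi \<gamma> = Delta phi \<gamma>'"
  unfolding Delta_def using assms by (metis (no_types, lifting))

lemma pathin_join_paths:
  assumes "pathin X g1" and "pathin X g2" and "g1 1 = g2 0"
  shows "pathin X (join_paths g1 g2)"
proof -
  let ?I = "top_of_set {0..1::real}"
  have "continuous_map ?I X (\<lambda>t. if t \<le> 1/2 then (g1 \<circ> (*) 2) t else (g2 \<circ> (\<lambda>t. 2 * t - 1)) t)"
  proof (intro continuous_map_cases_le continuous_map_compose, force, force)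
    show "continuous_map (subtopology ?I {t \<in> topspace ?I. t \<le> 1/2}) ?I ((*) 2)"
      by (auto simp: continuous_map_in_subtopology continuous_map_from_subtopology)
    have "continuous_map (subtopology ?I {t. 0 \<le> t \<and> t \<le> 1 \<and> 1 \<le> t * 2}) euclideanreal
        (\<lambda>t. 2 * t - 1)"
      by (intro continuous_intros) (force intro: continuous_map_from_subtopology)
    then show "continuous_map (subtopology ?I {t \<in> topspace ?I. 1/2 \<le> t}) ?I (\<lambda>t. 2 * t - 1)"
      by (force simp: continuous_map_in_subtopology)
  qed (use assms in \<open>auto simp: pathin_def mult.commute\<close>)
  then show ?thesis
    unfolding pathin_def join_paths_def comp_def .
qed

lemma orbit_path_Suc_0 [simp]: "orbit_path G y (Suc 0) = (\<lambda>t. G t y)"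
  by (simp add: orbit_path_def)

lemma orbit_path_Suc_Suc:
  "orbit_path G y (Suc (Suc n)) = join_paths (\<lambda>t. G t y) (orbit_path G (G 1 y) (Suc n))"
proof -
  have "[0..<Suc (Suc n)] = 0 # map Suc [0..<Suc n]"
    by (simp del: upt_Suc add: upt_conv_Cons map_Suc_upt)
  then have "map (\<lambda>k t. G t ((G 1 ^^ k) y)) [0..<Suc (Suc n)] =
      (\<lambda>t. G t y) # map (\<lambda>k t. G t ((G 1 ^^ k) (G 1 y))) [0..<Suc n]"
    by (simp add: funpow_Suc_right del: upt_Suc funpow.simps)
  then show ?thesis
    by (simp add: orbit_path_def upt_conv_Cons del: upt_Suc)
qed

lemma circle_proj_add: "circle_proj (a + b) = circle_proj a * circle_proj b"
  by (simp add: circle_proj_def distrib_left distrib_right exp_add)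

lemma circle_proj_Im_Ln:
  assumes "norm u = 1"
  shows "circle_proj (Im (Ln u) / (2 * pi)) = u"
proof -
  have "u \<noteq> 0" using assms by auto
  then have "Ln u = \<i> * of_real (Im (Ln u))"
    using assms by (simp add: complex_eq_iff)
  then show ?thesis
    using exp_Ln[OF \<open>u \<noteq> 0\<close>] by (simp add: circle_proj_def mult.commute)
qed

text \<open>Dividing by \<open>\<phi>(y)\<close> moves the values near \<open>y\<close> into the half-plane \<open>Re > 0\<close>, where the
  principal logarithm is continuous.\<close>

lemma local_circle_lift:
  assumes phi: "continuous_map X (top_of_set (sphere 0 1)) phi" and y: "y \<in> topspace X"
  obtains U f where "openin X U" "y \<in> U" "continuous_map (subtopology X U) euclideanreal f"
    "\<And>z. z \<in> U \<Longrightarrow> circle_proj (f z) = phi z"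
proof -
  define w where "w = phi y"
  have norm_phi: "norm (phi z) = 1" if "z \<in> topspace X" for z
    using phi that by (auto simp: continuous_map_def)
  then have "norm w = 1" and "w \<noteq> 0"
    using y by (force simp: w_def)+
  have "continuous_map X euclidean phi"
    using phi continuous_map_in_subtopology by blast
  then have cont_quot: "continuous_map X euclidean (\<lambda>z. phi z / w)"
    by (rule continuous_map_compose[unfolded o_def])
      (use \<open>w \<noteq> 0\<close> in \<open>simp add: continuous_intros\<close>)
  define U where "U = {z \<in> topspace X. Re (phi z / w) \<in> {0<..}}"
  define f where "f z = Im (Ln (phi z / w)) / (2 * pi) + Im (Ln w) / (2 * pi)" for z
  show thesis
  proof
    show "openin X U"
      unfolding U_def
      by (rule openin_continuous_map_preimage
          [OF continuous_map_compose[OF cont_quot, of euclideanreal, unfolded o_def]])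
        (simp_all add: continuous_intros)
    show "y \<in> U"
      using y \<open>w \<noteq> 0\<close> by (simp add: U_def w_def)
    have "continuous_map (subtopology X U) (top_of_set {v. 0 < Re v}) (\<lambda>z. phi z / w)"
      (is "continuous_map _ _ ?q")
      using cont_quot
      by (auto simp: U_def continuous_map_in_subtopology continuous_map_from_subtopology)
    moreover have "continuous_map (top_of_set {v. 0 < Re v}) euclideanreal
        (\<lambda>v. Im (Ln v) / (2 * pi) + Im (Ln w) / (2 * pi))" (is "continuous_map _ _ ?l")
      unfolding continuous_map_iff_continuous
      by (intro continuous_intros) (auto simp: complex_nonpos_Reals_iff)
    ultimately show "continuous_map (subtopology X U) euclideanreal f"
      unfolding f_def[abs_def] using continuous_map_compose[of _ _ ?q _ ?l] by (simp add: o_def)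
    show "circle_proj (f z) = phi z" if "z \<in> U" for z
    proof -
      have "norm (phi z / w) = 1"
        using that norm_phi \<open>norm w = 1\<close> by (simp add: U_def norm_divide)
      then show ?thesis
        using \<open>norm w = 1\<close> \<open>w \<noteq> 0\<close>
        by (simp add: f_def circle_proj_add circle_proj_Im_Ln)
    qed
  qed
qed

lemma topspace_bundle_top:
  assumes "continuous_map X (top_of_set (sphere 0 1)) phi"
  shows "topspace (bundle_top X phi) = topspace X \<times> UNIV"
proof
  show "topspace (bundle_top X phi) \<subseteq> topspace X \<times> UNIV"
    by (auto simp: bundle_top_def dest: openin_subset)
  show "topspace X \<times> UNIV \<subseteq> topspace (bundle_top X phi)"
  proof clarify
    fix y s assume "y \<in> topspace X"
    then obtain U f where "openin X U" "y \<in> U" "continuous_map (subtopology X U) euclideanreal f"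
      "\<And>z. z \<in> U \<Longrightarrow> circle_proj (f z) = phi z"
      using local_circle_lift assms by metis
    moreover have "(y, s) \<in> {(z, f z + (s - f y)) | z. z \<in> U}"
      using \<open>y \<in> U\<close> by force
    ultimately show "(y, s) \<in> topspace (bundle_top X phi)"
      unfolding bundle_top_def topology_generated_by_topspace by blast
  qed
qed

lemma lifted_isotopy_pathin:
  assumes "lifted_isotopy X phi G Gh" and "yh \<in> topspace (bundle_top X phi)"
  shows "pathin (bundle_top X phi) (\<lambda>t. Gh t yh)"
proof -
  let ?Xh = "bundle_top X phi"
  have "continuous_map (top_of_set {0..1}) (prod_topology (top_of_set {0..1}) ?Xh) (\<lambda>t. (t, yh))"
    using assms(2) by (simp add: continuous_map_pairwise o_def continuous_map_id[unfolded id_def])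
  moreover have "continuous_map (prod_topology (top_of_set {0..1}) ?Xh) ?Xh (\<lambda>(t, y). Gh t y)"
    using assms(1) unfolding lifted_isotopy_def Let_def by blast
  ultimately have "continuous_map (top_of_set {0..1}) ?Xh ((\<lambda>(t, y). Gh t y) \<circ> (\<lambda>t. (t, yh)))"
    by (rule continuous_map_compose)
  then show ?thesis
    unfolding pathin_def by (simp add: o_def)
qed

lemma lifted_isotopy_fst:
  assumes "lifted_isotopy X phi G Gh" and "t \<in> {0..1}" and "yh \<in> topspace (bundle_top X phi)"
  shows "fst (Gh t yh) = G t (fst yh)"
  using assms unfolding lifted_isotopy_def Let_def by blast

lemma lifted_isotopy_start:
  assumes "lifted_isotopy X phi G Gh" and "yh \<in> topspace (bundle_top X phi)"
  shows "Gh 0 yh = yh"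
  using assms unfolding lifted_isotopy_def Let_def by blast

lemma lifted_isotopy_in_topspace:
  assumes "lifted_isotopy X phi G Gh" and "t \<in> {0..1}" and "yh \<in> topspace (bundle_top X phi)"
  shows "Gh t yh \<in> topspace (bundle_top X phi)"
  using assms homeomorphic_imp_surjective_map unfolding lifted_isotopy_def Let_def by blast

lemma lifted_isotopy_orbit_path_lift:
  assumes L: "lifted_isotopy X phi G Gh" and "yh \<in> topspace (bundle_top X phi)"
  shows "\<exists>\<sigma>. pathin (bundle_top X phi) \<sigma> \<and> \<sigma> 0 = yh \<and> \<sigma> 1 = (Gh 1 ^^ Suc n) yh \<and>
    (\<forall>t\<in>{0..1}. fst (\<sigma> t) = orbit_path G (fst yh) (Suc n) t)"
  using assms(2)
proof (induction n arbitrary: yh)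
  case 0
  show ?case
    by (rule exI[of _ "\<lambda>t. Gh t yh"])
      (simp add: lifted_isotopy_pathin[OF L 0] lifted_isotopy_start[OF L 0]
        lifted_isotopy_fst[OF L _ 0])
next
  case (Suc n)
  let ?yh' = "Gh 1 yh"
  have "?yh' \<in> topspace (bundle_top X phi)"
    by (rule lifted_isotopy_in_topspace[OF L _ Suc.prems]) simp
  then obtain \<sigma> where \<sigma>: "pathin (bundle_top X phi) \<sigma>" "\<sigma> 0 = ?yh'"
      "\<sigma> 1 = (Gh 1 ^^ Suc n) ?yh'"
    and over: "\<forall>t\<in>{0..1}. fst (\<sigma> t) = orbit_path G (fst ?yh') (Suc n) t"
    using Suc.IH by blast
  have "fst ?yh' = G 1 (fst yh)"
    using lifted_isotopy_fst[OF L _ Suc.prems] by simp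
  then have "\<forall>t\<in>{0..1}.
      fst (join_paths (\<lambda>t. Gh t yh) \<sigma> t) = orbit_path G (fst yh) (Suc (Suc n)) t"
    using over lifted_isotopy_fst[OF L _ Suc.prems] by (simp add: join_paths_def orbit_path_Suc_Suc)
  moreover have "pathin (bundle_top X phi) (join_paths (\<lambda>t. Gh t yh) \<sigma>)"
    by (rule pathin_join_paths[OF lifted_isotopy_pathin[OF L Suc.prems] \<sigma>(1)]) (simp add: \<sigma>(2))
  moreover have "(Gh 1 ^^ Suc n) ?yh' = (Gh 1 ^^ Suc (Suc n)) yh"
    by (metis comp_apply funpow_Suc_right)
  ultimately show ?case
    using \<sigma>(3) lifted_isotopy_start[OF L Suc.prems] by (auto simp: join_paths_def)
qed

lemma theta_funpow_lifted_isotopy: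
  assumes L: "lifted_isotopy X phi G Gh" and T: "theta_function X phi \<theta>"
    and "yh \<in> topspace (bundle_top X phi)"
  shows "\<theta> ((Gh 1 ^^ Suc n) yh) - \<theta> yh = Delta phi (orbit_path G (fst yh) (Suc n))"
proof -
  obtain \<sigma> where "pathin (bundle_top X phi) \<sigma>" "\<sigma> 0 = yh" "\<sigma> 1 = (Gh 1 ^^ Suc n) yh"
    and over: "\<forall>t\<in>{0..1}. fst (\<sigma> t) = orbit_path G (fst yh) (Suc n) t"
    using lifted_isotopy_orbit_path_lift[OF L assms(3)] by blast
  then have "\<theta> ((Gh 1 ^^ Suc n) yh) - \<theta> yh = Delta phi (fst \<circ> \<sigma>)"
    using T unfolding theta_function_def by metis
  also have "\<dots> = Delta phi (orbit_path G (fst yh) (Suc n))"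
    by (rule Delta_cong) (simp add: over)
  finally show ?thesis .
qed

text \<open>The point of the fibre picked by the choice in \<^const>\<open>rho\<close> is arbitrary; it lies in the
  bundle only because the bundle is all of \<open>X \<times> \<real>\<close>.\<close>

lemma rho_funpow_lifted_isotopy:
  assumes phi: "continuous_map X (top_of_set (sphere 0 1)) phi"
    and L: "lifted_isotopy X phi G Gh" and T: "theta_function X phi \<theta>" and "y \<in> topspace X"
  shows "rho \<theta> (Gh 1 ^^ Suc n) y = Delta phi (orbit_path G y (Suc n))"
proof -
  define yh :: "'a \<times> real" where "yh = (SOME yh. fst yh = y)"
  have "fst yh = y"
    unfolding yh_def by (rule someI[of _ "(y, 0)"]) simp
  then have "yh \<in> topspace (bundle_top X phi)"
    using assms(4) topspace_bundle_top[OF phi] by (cases yh) simp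
  then show ?thesis
    using theta_funpow_lifted_isotopy[OF L T] \<open>fst yh = y\<close>
    unfolding rho_def Let_def yh_def[symmetric] by metis
qed

theorem proposition2p18:
  fixes X :: "'a topology" and G :: "real \<Rightarrow> 'a \<Rightarrow> 'a" and phi :: "'a \<Rightarrow> complex"
    and Gh :: "real \<Rightarrow> 'a \<times> real \<Rightarrow> 'a \<times> real" and \<theta> :: "'a \<times> real \<Rightarrow> real"
    and x :: 'a and \<mu> :: "'a measure"
  assumes "closed_manifold X"
    and "isotopy_from_id X G"
    and "continuous_map X (top_of_set (sphere 0 1)) phi"
    and "lifted_isotopy X phi G Gh"
    and "theta_function X phi \<theta>"
    and "x \<in> topspace X"
  shows "(\<forall>L. ((\<lambda>n. Delta phi (orbit_path G x n) / real n) \<longlonglongrightarrow> L) \<longleftrightarrow>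
              ((\<lambda>n. rho \<theta> (Gh 1 ^^ n) x / real n) \<longlonglongrightarrow> L)) \<and>
         (prob_space \<mu> \<and> sets \<mu> = sets (borel_of X) \<and> space \<mu> = topspace X \<and>
          G 1 \<in> measurable \<mu> \<mu> \<and> distr \<mu> \<mu> (G 1) = \<mu> \<longrightarrow>
          (\<integral>y. Delta phi (\<lambda>t. G t y) \<partial>\<mu>) = (\<integral>y. rho \<theta> (Gh 1) y \<partial>\<mu>))"
proof -
  note rho_orbit = rho_funpow_lifted_isotopy[OF assms(3-5)]
  have sequences_eq:
    "(\<lambda>n. Delta phi (orbit_path G x n) / real n) = (\<lambda>n. rho \<theta> (Gh 1 ^^ n) x / real n)"
  proof
    show "Delta phi (orbit_path G x n) / real n = rho \<theta> (Gh 1 ^^ n) x / real n" for n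
      using rho_orbit[OF assms(6)] by (cases n) simp_all
  qed
  have integrands_eq: "Delta phi (\<lambda>t. G t y) = rho \<theta> (Gh 1) y" if "y \<in> topspace X" for y
    using rho_orbit[OF that, of 0] by simp
  have "(\<integral>y. Delta phi (\<lambda>t. G t y) \<partial>\<mu>) = (\<integral>y. rho \<theta> (Gh 1) y \<partial>\<mu>)"
    if "space \<mu> = topspace X"
    using that integrands_eq by (auto intro: Bochner_Integration.integral_cong)
  with sequences_eq show ?thesis
    by simp
qed

end
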